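(* Let $N\geq 3$, let $\Omega\subset\mathbb{R}^N$ be a bounded domain with smooth boundary, let $2\leq q<p\leq 2^*:=\frac{2N}{N-2}$, and let $a,b,\lambda,\mu>0$. Let $\alpha>0$ and let $u_\alpha$ be a solution of $$-\Delta u=\alpha u^{q-1}+u^{p-1}\ \text{in }\Omega,\qquad u>0\ \text{in }\Omega,\qquad u=0\ \text{on }\partial\Omega. \qquad (\mathcal{P}_\alpha)$$ Define $$f_{a,b,\lambda,\mu}(\alpha):=a\bigg(\frac{\alpha\mu^{\frac{q-2}{p-2}}}{\lambda}\bigg)^{\frac{p-2}{p-q}}+b\bigg(\frac{\alpha\mu^{\frac{q-2}{p-2}}}{\lambda}\bigg)^{\frac{p-4}{p-q}}\mu^{\frac{2}{2-p}}\int_{\Omega}|\nabla u_{\alpha}|^2dx.$$ Then $\big(\frac{\lambda}{\alpha\mu}\big)^{\frac{1}{p-q}}u_\alpha$ is a solution of $$-\bigg(a+b\int_{\Omega}|\nabla u|^2dx\bigg)\Delta u=\lambda u^{q-1}+\mu u^{p-1}\ \text{in }\Omega,\qquad u>0\ \text{in }\Omega,\qquad u=0\ \text{on }\partial\Omega$$ if and only if $f_{a,b,\lambda,\mu}(\alpha)=1$.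
   Context: Solutions are understood in $H_0^1(\Omega)$ (weak sense). *)

theory Defs
  imports "HOL-Analysis.Analysis"
begin

definition pdiff :: "(real^'n \<Rightarrow> real) \<Rightarrow> 'n \<Rightarrow> real^'n \<Rightarrow> real" where
  "pdiff f i x = frechet_derivative f (at x) (axis i 1)"

definition grad :: "(real^'n \<Rightarrow> real) \<Rightarrow> real^'n \<Rightarrow> real^'n" where
  "grad f x = (\<chi> i. pdiff f i x)"

coinductive Cinf :: "(real^'n \<Rightarrow> real) \<Rightarrow> bool" where
  "\<lbrakk>\<forall>x. f differentiable (at x); \<forall>i. Cinf (pdiff f i)\<rbrakk> \<Longrightarrow> Cinf f"

definition test_fun :: "(real^'n) set \<Rightarrow> (real^'n \<Rightarrow> real) \<Rightarrow> bool" where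
  "test_fun \<Omega> \<phi> \<longleftrightarrow> Cinf \<phi> \<and> compact (closure {x. \<phi> x \<noteq> 0}) \<and> closure {x. \<phi> x \<noteq> 0} \<subseteq> \<Omega>"

definition smooth_bounded_domain :: "(real^'n) set \<Rightarrow> bool" where
  "smooth_bounded_domain \<Omega> \<longleftrightarrow> open \<Omega> \<and> connected \<Omega> \<and> \<Omega> \<noteq> {} \<and> bounded \<Omega> \<and>
     (\<forall>x\<in>frontier \<Omega>. \<exists>U \<phi>. open U \<and> x \<in> U \<and> Cinf \<phi> \<and> (\<forall>y\<in>U. grad \<phi> y \<noteq> 0) \<and>
        \<Omega> \<inter> U = {y\<in>U. \<phi> y < 0})"

definition H01 :: "(real^'n) set \<Rightarrow> (real^'n \<Rightarrow> real) \<Rightarrow> (real^'n \<Rightarrow> real^'n) \<Rightarrow> bool" where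
  "H01 \<Omega> u G \<longleftrightarrow>
     set_borel_measurable lborel \<Omega> u \<and> set_borel_measurable lborel \<Omega> G \<and>
     set_integrable lborel \<Omega> (\<lambda>x. (u x)\<^sup>2) \<and> set_integrable lborel \<Omega> (\<lambda>x. (norm (G x))\<^sup>2) \<and>
     (\<exists>\<psi>. (\<forall>k. test_fun \<Omega> (\<psi> k)) \<and>
        (\<lambda>k. LINT x:\<Omega>|lborel. (\<psi> k x - u x)\<^sup>2) \<longlonglongrightarrow> 0 \<and>
        (\<lambda>k. LINT x:\<Omega>|lborel. (norm (grad (\<psi> k) x - G x))\<^sup>2) \<longlonglongrightarrow> 0)"

definition dirichlet :: "(real^'n) set \<Rightarrow> (real^'n \<Rightarrow> real^'n) \<Rightarrow> real" where
  "dirichlet \<Omega> G = (LINT x:\<Omega>|lborel. (norm (G x))\<^sup>2)"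

definition weak_sol_with :: "(real \<Rightarrow> real) \<Rightarrow> real \<Rightarrow> real \<Rightarrow> real \<Rightarrow> real \<Rightarrow> (real^'n) set \<Rightarrow>
    (real^'n \<Rightarrow> real) \<Rightarrow> (real^'n \<Rightarrow> real^'n) \<Rightarrow> bool" where
  "weak_sol_with M lam mu q p \<Omega> u G \<longleftrightarrow>
     H01 \<Omega> u G \<and> (AE x in lborel. x \<in> \<Omega> \<longrightarrow> u x > 0) \<and>
     (\<forall>\<phi>. test_fun \<Omega> \<phi> \<longrightarrow>
        set_integrable lborel \<Omega> (\<lambda>x. G x \<bullet> grad \<phi> x) \<and>
        set_integrable lborel \<Omega> (\<lambda>x. (lam * u x powr (q - 1) + mu * u x powr (p - 1)) * \<phi> x) \<and>
        M (dirichlet \<Omega> G) * (LINT x:\<Omega>|lborel. G x \<bullet> grad \<phi> x) =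
          (LINT x:\<Omega>|lborel. (lam * u x powr (q - 1) + mu * u x powr (p - 1)) * \<phi> x))"

definition sol_P :: "real \<Rightarrow> real \<Rightarrow> real \<Rightarrow> (real^'n) set \<Rightarrow> (real^'n \<Rightarrow> real) \<Rightarrow> (real^'n \<Rightarrow> real^'n) \<Rightarrow> bool" where
  "sol_P \<alpha> q p \<Omega> u G \<longleftrightarrow> weak_sol_with (\<lambda>_. 1) \<alpha> 1 q p \<Omega> u G"

definition sol_Kirchhoff :: "real \<Rightarrow> real \<Rightarrow> real \<Rightarrow> real \<Rightarrow> real \<Rightarrow> real \<Rightarrow> (real^'n) set \<Rightarrow> (real^'n \<Rightarrow> real) \<Rightarrow> bool" where
  "sol_Kirchhoff a b lam mu q p \<Omega> u \<longleftrightarrow> (\<exists>G. weak_sol_with (\<lambda>D. a + b * D) lam mu q p \<Omega> u G)"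

definition f_abl :: "real \<Rightarrow> real \<Rightarrow> real \<Rightarrow> real \<Rightarrow> real \<Rightarrow> real \<Rightarrow> (real^'n) set \<Rightarrow> (real^'n \<Rightarrow> real^'n) \<Rightarrow> real \<Rightarrow> real" where
  "f_abl a b lam mu q p \<Omega> G \<alpha> =
     a * (\<alpha> * mu powr ((q - 2) / (p - 2)) / lam) powr ((p - 2) / (p - q)) +
     b * (\<alpha> * mu powr ((q - 2) / (p - 2)) / lam) powr ((p - 4) / (p - q)) * mu powr (2 / (2 - p)) *
       dirichlet \<Omega> G"

end

theory Submission
  imports Defs
begin

text \<open>Put \<open>t = (\<lambda>/(\<alpha>\<mu>))^(1/(p-q))\<close>. Then \<open>\<lambda> t^(q-1) = \<alpha>\<mu> t^(p-1)\<close>, so for \<open>v = t u\<close> the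
  nonlinearity is \<open>\<lambda> v^(q-1) + \<mu> v^(p-1) = \<mu> t^(p-1) (\<alpha> u^(q-1) + u^(p-1))\<close>. Weak gradients in
  \<open>H\<^sub>0\<^sup>1\<close> are unique, so the gradient of \<open>v\<close> is \<open>t \<nabla>u\<close>, and the Kirchhoff equation for \<open>v\<close> is the
  equation of \<open>(P\<^sub>\<alpha>)\<close> multiplied by \<open>(a + b t\<^sup>2 D) t\<close> on the left and by \<open>\<mu> t^(p-1)\<close> on the
  right, where \<open>D = \<integral>|\<nabla>u|\<^sup>2\<close>. Since \<open>D > 0\<close>, some test function sees \<open>\<nabla>u\<close>, so \<open>v\<close> is a
  solution iff \<open>(a + b t\<^sup>2 D) t = \<mu> t^(p-1)\<close>; dividing by \<open>\<mu> t^(p-1)\<close> gives \<open>f(\<alpha>) = 1\<close>.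
  The analysis needed is Green's identity against test functions, density of their gradients
  among weak gradients (which gives uniqueness), and a smooth bump to show \<open>D > 0\<close>.\<close>

section \<open>Square integrable functions\<close>

lemma quadratic_nonneg_imp_discriminant_le:
  fixes A B C :: real
  assumes "A \<ge> 0" and nonneg: "\<And>s. 0 \<le> A * s\<^sup>2 + 2 * C * s + B"
  shows "C\<^sup>2 \<le> A * B"
proof (cases "A = 0")
  case True
  have "C = 0"
  proof (rule ccontr)
    assume "C \<noteq> 0"
    with True nonneg[of "- (B + 1) / (2 * C)"] show False by simp
  qed
  with True show ?thesis by simp
next
  case False
  with \<open>A \<ge> 0\<close> have "A > 0" by simp
  from nonneg[of "- C / A"] have "0 \<le> B - C\<^sup>2 / A"
    using \<open>A > 0\<close> by (simp add: power2_eq_square)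
  with \<open>A > 0\<close> show ?thesis by (simp add: divide_le_eq mult.commute)
qed

lemma integrable_inner_square_integrable:
  fixes F G :: "'a \<Rightarrow> 'b::euclidean_space"
  assumes [measurable]: "F \<in> borel_measurable M" "G \<in> borel_measurable M"
    and "integrable M (\<lambda>x. (norm (F x))\<^sup>2)" "integrable M (\<lambda>x. (norm (G x))\<^sup>2)"
  shows "integrable M (\<lambda>x. F x \<bullet> G x)"
proof (rule Bochner_Integration.integrable_bound[OF Bochner_Integration.integrable_add[OF assms(3,4)]])
  show "AE x in M. norm (F x \<bullet> G x) \<le> norm ((norm (F x))\<^sup>2 + (norm (G x))\<^sup>2)"
  proof (rule AE_I2)
    fix x
    have "norm (F x \<bullet> G x) \<le> norm (F x) * norm (G x)"
      using Cauchy_Schwarz_ineq2 by simp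
    also have "\<dots> \<le> (norm (F x))\<^sup>2 + (norm (G x))\<^sup>2"
    proof -
      have "0 \<le> norm (F x) * norm (G x)" by simp
      moreover have "2 * (norm (F x) * norm (G x)) \<le> (norm (F x))\<^sup>2 + (norm (G x))\<^sup>2"
        using zero_le_square[of "norm (F x) - norm (G x)"] by (simp add: power2_eq_square algebra_simps)
      ultimately show ?thesis by linarith
    qed
    finally show "norm (F x \<bullet> G x) \<le> norm ((norm (F x))\<^sup>2 + (norm (G x))\<^sup>2)" by simp
  qed
qed measurable

lemma Cauchy_Schwarz_integral_inner:
  fixes F G :: "'a \<Rightarrow> 'b::euclidean_space"
  assumes [measurable]: "F \<in> borel_measurable M" "G \<in> borel_measurable M"
    and iF: "integrable M (\<lambda>x. (norm (F x))\<^sup>2)" and iG: "integrable M (\<lambda>x. (norm (G x))\<^sup>2)"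
  shows "\<bar>integral\<^sup>L M (\<lambda>x. F x \<bullet> G x)\<bar>
    \<le> sqrt (integral\<^sup>L M (\<lambda>x. (norm (F x))\<^sup>2)) * sqrt (integral\<^sup>L M (\<lambda>x. (norm (G x))\<^sup>2))"
proof -
  define A where "A = integral\<^sup>L M (\<lambda>x. (norm (F x))\<^sup>2)"
  define B where "B = integral\<^sup>L M (\<lambda>x. (norm (G x))\<^sup>2)"
  define C where "C = integral\<^sup>L M (\<lambda>x. F x \<bullet> G x)"
  have iFG: "integrable M (\<lambda>x. F x \<bullet> G x)"
    by (rule integrable_inner_square_integrable[OF _ _ iF iG]) measurable
  have "0 \<le> A * s\<^sup>2 + 2 * C * s + B" for s
  proof -
    have "0 \<le> integral\<^sup>L M (\<lambda>x. (norm (s *\<^sub>R F x + G x))\<^sup>2)" by simp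
    also have "\<dots> = integral\<^sup>L M (\<lambda>x. s\<^sup>2 * (norm (F x))\<^sup>2 + 2 * s * (F x \<bullet> G x) + (norm (G x))\<^sup>2)"
      unfolding power2_norm_eq_inner
      by (simp add: inner_add_left inner_add_right inner_commute algebra_simps power2_eq_square)
    also have "\<dots> = A * s\<^sup>2 + 2 * C * s + B"
      using iF iG iFG unfolding A_def B_def C_def by (simp add: integral_add)
    finally show ?thesis .
  qed
  then have "C\<^sup>2 \<le> A * B"
    by (intro quadratic_nonneg_imp_discriminant_le) (simp_all add: A_def)
  then have "sqrt (C\<^sup>2) \<le> sqrt (A * B)" by (rule real_sqrt_le_mono)
  then show ?thesis unfolding A_def B_def C_def by (simp add: real_sqrt_mult)
qed

lemma square_integrable_diff:
  fixes F G :: "'a \<Rightarrow> 'b::euclidean_space"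
  assumes [measurable]: "F \<in> borel_measurable M" "G \<in> borel_measurable M"
    and "integrable M (\<lambda>x. (norm (F x))\<^sup>2)" "integrable M (\<lambda>x. (norm (G x))\<^sup>2)"
  shows "integrable M (\<lambda>x. (norm (F x - G x))\<^sup>2)"
proof (rule Bochner_Integration.integrable_bound[OF Bochner_Integration.integrable_add
      [OF integrable_mult_right[OF assms(3)] integrable_mult_right[OF assms(4)]]])
  show "AE x in M. norm ((norm (F x - G x))\<^sup>2) \<le> norm (2 * (norm (F x))\<^sup>2 + 2 * (norm (G x))\<^sup>2)"
  proof (rule AE_I2)
    fix x
    have "(norm (F x - G x))\<^sup>2 \<le> (norm (F x) + norm (G x))\<^sup>2"
      by (simp add: power_mono norm_triangle_ineq4)
    also have "\<dots> \<le> 2 * (norm (F x))\<^sup>2 + 2 * (norm (G x))\<^sup>2"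
      using zero_le_square[of "norm (F x) - norm (G x)"] by (simp add: power2_eq_square algebra_simps)
    finally show "norm ((norm (F x - G x))\<^sup>2) \<le> norm (2 * (norm (F x))\<^sup>2 + 2 * (norm (G x))\<^sup>2)"
      by simp
  qed
qed measurable

lemma integral_inner_L2_tendsto:
  fixes F :: "nat \<Rightarrow> 'a \<Rightarrow> 'b::euclidean_space" and F0 G :: "'a \<Rightarrow> 'b"
  assumes [measurable]: "\<And>k. F k \<in> borel_measurable M" "F0 \<in> borel_measurable M" "G \<in> borel_measurable M"
    and iF: "\<And>k. integrable M (\<lambda>x. (norm (F k x))\<^sup>2)"
    and iF0: "integrable M (\<lambda>x. (norm (F0 x))\<^sup>2)" and iG: "integrable M (\<lambda>x. (norm (G x))\<^sup>2)"
    and lim: "(\<lambda>k. integral\<^sup>L M (\<lambda>x. (norm (F k x - F0 x))\<^sup>2)) \<longlonglongrightarrow> 0"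
  shows "(\<lambda>k. integral\<^sup>L M (\<lambda>x. F k x \<bullet> G x)) \<longlonglongrightarrow> integral\<^sup>L M (\<lambda>x. F0 x \<bullet> G x)"
proof -
  have iD: "integrable M (\<lambda>x. (norm (F k x - F0 x))\<^sup>2)" for k
    by (rule square_integrable_diff[OF _ _ iF iF0]) measurable
  have "integral\<^sup>L M (\<lambda>x. F k x \<bullet> G x) - integral\<^sup>L M (\<lambda>x. F0 x \<bullet> G x)
      = integral\<^sup>L M (\<lambda>x. (F k x - F0 x) \<bullet> G x)" for k
  proof -
    have "integrable M (\<lambda>x. F k x \<bullet> G x)"
      by (rule integrable_inner_square_integrable[OF _ _ iF iG]) measurable
    moreover have "integrable M (\<lambda>x. F0 x \<bullet> G x)"
      by (rule integrable_inner_square_integrable[OF _ _ iF0 iG]) measurable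
    ultimately show ?thesis by (simp add: inner_diff_left)
  qed
  then have bound: "norm (integral\<^sup>L M (\<lambda>x. F k x \<bullet> G x) - integral\<^sup>L M (\<lambda>x. F0 x \<bullet> G x))
      \<le> sqrt (integral\<^sup>L M (\<lambda>x. (norm (F k x - F0 x))\<^sup>2)) * sqrt (integral\<^sup>L M (\<lambda>x. (norm (G x))\<^sup>2))" for k
    using Cauchy_Schwarz_integral_inner[OF _ _ iD iG] by simp
  have "(\<lambda>k. sqrt (integral\<^sup>L M (\<lambda>x. (norm (F k x - F0 x))\<^sup>2)) * sqrt (integral\<^sup>L M (\<lambda>x. (norm (G x))\<^sup>2)))
      \<longlonglongrightarrow> 0"
    using tendsto_mult[OF tendsto_real_sqrt[OF lim] tendsto_const] by simp
  then have "(\<lambda>k. integral\<^sup>L M (\<lambda>x. F k x \<bullet> G x) - integral\<^sup>L M (\<lambda>x. F0 x \<bullet> G x)) \<longlonglongrightarrow> 0"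
    by (rule Lim_null_comparison[rotated]) (use bound in auto)
  then show ?thesis by (rule LIM_zero_cancel)
qed

lemma set_lborel_conv_restrict_space:
  fixes \<Omega> :: "'a::euclidean_space set" and f g :: "'a \<Rightarrow> 'b::{banach, second_countable_topology}"
  assumes "open \<Omega>"
  shows "set_borel_measurable lborel \<Omega> f \<longleftrightarrow> f \<in> borel_measurable (restrict_space lborel \<Omega>)"
    and "set_integrable lborel \<Omega> g \<longleftrightarrow> integrable (restrict_space lborel \<Omega>) g"
    and "set_lebesgue_integral lborel \<Omega> g = integral\<^sup>L (restrict_space lborel \<Omega>) g"
    and "(AE x in lborel. x \<in> \<Omega> \<longrightarrow> P x) \<longleftrightarrow> (AE x in restrict_space lborel \<Omega>. P x)"
proof -
  have S: "\<Omega> \<inter> space lborel \<in> sets lborel" using assms by simp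
  show "set_borel_measurable lborel \<Omega> f \<longleftrightarrow> f \<in> borel_measurable (restrict_space lborel \<Omega>)"
    unfolding set_borel_measurable_def by (rule borel_measurable_restrict_space_iff[OF S, symmetric])
  show "set_integrable lborel \<Omega> g \<longleftrightarrow> integrable (restrict_space lborel \<Omega>) g"
    by (rule set_integrable_eq[OF S])
  show "set_lebesgue_integral lborel \<Omega> g = integral\<^sup>L (restrict_space lborel \<Omega>) g"
    unfolding set_lebesgue_integral_def by (rule integral_restrict_space[OF S, symmetric])
  show "(AE x in lborel. x \<in> \<Omega> \<longrightarrow> P x) \<longleftrightarrow> (AE x in restrict_space lborel \<Omega>. P x)"
    by (rule AE_restrict_space_iff[OF S, symmetric])
qed

lemma integrable_lborel_compact_support:
  fixes f :: "'a::euclidean_space \<Rightarrow> real"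
  assumes "compact K" "continuous_on UNIV f" "\<And>x. x \<notin> K \<Longrightarrow> f x = 0"
  shows "integrable lborel f"
proof -
  have "integrable lborel (\<lambda>x. indicat_real K x *\<^sub>R f x)"
    by (rule borel_integrable_compact) (use assms continuous_on_subset[OF assms(2)] in auto)
  also have "(\<lambda>x. indicat_real K x *\<^sub>R f x) = f"
    using assms(3) by (force simp: indicator_def)
  finally show ?thesis .
qed

lemma compact_support_restrict_space:
  fixes f :: "'a::euclidean_space \<Rightarrow> real"
  assumes "open \<Omega>" "compact K" "K \<subseteq> \<Omega>" "continuous_on UNIV f" "\<And>x. x \<notin> K \<Longrightarrow> f x = 0"
  shows "integrable (restrict_space lborel \<Omega>) f"
    and "integral\<^sup>L (restrict_space lborel \<Omega>) f = integral\<^sup>L lborel f"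
proof -
  have S: "\<Omega> \<inter> space lborel \<in> sets lborel" using assms by simp
  have i: "integrable lborel f" by (rule integrable_lborel_compact_support[OF assms(2,4,5)])
  show "integrable (restrict_space lborel \<Omega>) f"
    unfolding integrable_restrict_space[OF S] by (rule integrable_mult_indicator) (use assms i in auto)
  have "(\<lambda>x. indicator \<Omega> x *\<^sub>R f x) = f" using assms(3,5) by (force simp: indicator_def)
  then show "integral\<^sup>L (restrict_space lborel \<Omega>) f = integral\<^sup>L lborel f"
    by (simp add: integral_restrict_space[OF S])
qed

lemma continuous_on_borel_measurable_restrict_space:
  fixes f :: "'a::euclidean_space \<Rightarrow> 'b::euclidean_space"
  assumes "continuous_on UNIV f"
  shows "f \<in> borel_measurable (restrict_space lborel \<Omega>)"
  by (rule measurable_restrict_space1) (simp add: borel_measurable_continuous_onI[OF assms])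

lemma not_AE_restrict_space_notin_ball:
  fixes \<Omega> :: "'a::euclidean_space set"
  assumes "open \<Omega>" "ball x0 r \<subseteq> \<Omega>" "r > 0"
  shows "\<not> (AE x in restrict_space lborel \<Omega>. x \<notin> ball x0 r)"
proof
  assume "AE x in restrict_space lborel \<Omega>. x \<notin> ball x0 r"
  then have "AE x in lborel. x \<in> \<Omega> \<longrightarrow> x \<notin> ball x0 r"
    unfolding set_lborel_conv_restrict_space(4)[OF assms(1)] .
  then have "AE x in lborel. x \<notin> ball x0 r"
    by eventually_elim (use assms(2) in blast)
  then have "ball x0 r \<in> null_sets lborel"
    by (subst AE_iff_null_sets) auto
  moreover have "emeasure lborel (ball x0 r) > 0"
    using assms(3) by (simp add: emeasure_ball)
  ultimately show False by auto
qed

section \<open>Smooth functions\<close>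

lemma Cinf_differentiable: "Cinf f \<Longrightarrow> f differentiable (at x)"
  by (erule Cinf.cases) auto

lemma Cinf_pdiff: "Cinf f \<Longrightarrow> Cinf (pdiff f i)"
  by (erule Cinf.cases) auto

lemma Cinf_continuous_on: "Cinf f \<Longrightarrow> continuous_on UNIV f"
  by (meson Cinf_differentiable continuous_at_imp_continuous_on differentiable_imp_continuous_within)

lemma Cinf_continuous_on_grad: "Cinf f \<Longrightarrow> continuous_on UNIV (grad f)"
  unfolding grad_def by (intro continuous_on_vec_lambda Cinf_continuous_on Cinf_pdiff)

lemma pdiff_eqI: "(f has_derivative f') (at x) \<Longrightarrow> pdiff f i x = f' (axis i 1)"
  unfolding pdiff_def using frechet_derivative_at by metis

lemma pdiff_add:
  assumes "f differentiable (at x)" "g differentiable (at x)"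
  shows "pdiff (\<lambda>y. f y + g y) i x = pdiff f i x + pdiff g i x"
proof -
  have "((\<lambda>y. f y + g y) has_derivative
      (\<lambda>h. frechet_derivative f (at x) h + frechet_derivative g (at x) h)) (at x)"
    by (intro derivative_intros frechet_derivative_works[THEN iffD1] assms)
  from pdiff_eqI[OF this] show ?thesis unfolding pdiff_def by simp
qed

lemma pdiff_cmult:
  assumes "f differentiable (at x)"
  shows "pdiff (\<lambda>y. c * f y) i x = c * pdiff f i x"
proof -
  have "((\<lambda>y. c * f y) has_derivative (\<lambda>h. c * frechet_derivative f (at x) h)) (at x)"
    by (intro derivative_intros frechet_derivative_works[THEN iffD1] assms)
  from pdiff_eqI[OF this] show ?thesis unfolding pdiff_def by simp
qed

lemma pdiff_mult:
  assumes "f differentiable (at x)" "g differentiable (at x)"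
  shows "pdiff (\<lambda>y. f y * g y) i x = pdiff f i x * g x + f x * pdiff g i x"
proof -
  have "((\<lambda>y. f y * g y) has_derivative
      (\<lambda>h. f x * frechet_derivative g (at x) h + frechet_derivative f (at x) h * g x)) (at x)"
    by (intro derivative_intros frechet_derivative_works[THEN iffD1] assms)
  from pdiff_eqI[OF this] show ?thesis unfolding pdiff_def by simp
qed

lemma grad_cmult: "Cinf f \<Longrightarrow> grad (\<lambda>x. c * f x) x = c *\<^sub>R grad f x"
  unfolding grad_def by (simp add: vec_eq_iff pdiff_cmult Cinf_differentiable)

lemma Cinf_cmult: "Cinf f \<Longrightarrow> Cinf (\<lambda>x. c * f x)"
proof (rule Cinf.coinduct[of "\<lambda>h. \<exists>g. h = (\<lambda>x. c * g x) \<and> Cinf g"])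
  fix h assume "\<exists>g. h = (\<lambda>x. c * g x) \<and> Cinf g"
  then obtain g where h: "h = (\<lambda>x. c * g x)" and "Cinf g" by blast
  have "pdiff h i = (\<lambda>x. c * pdiff g i x)" for i
    using \<open>Cinf g\<close> unfolding h by (simp add: fun_eq_iff pdiff_cmult Cinf_differentiable)
  with \<open>Cinf g\<close> show "\<exists>f. h = f \<and> (\<forall>x. f differentiable at x) \<and>
      (\<forall>i. (\<exists>g. pdiff f i = (\<lambda>x. c * g x) \<and> Cinf g) \<or> Cinf (pdiff f i))"
    unfolding h by (auto intro!: derivative_intros Cinf_differentiable Cinf_pdiff)
qed auto

lemma not_in_closure_support_imp_eq_0:
  "x \<notin> closure {y. f y \<noteq> (0::'b::zero)} \<Longrightarrow> f x = 0"
  using closure_subset[of "{y. f y \<noteq> 0}"] by blast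

lemma pdiff_eq_0_outside_closure_support:
  assumes "x \<notin> closure {y. f y \<noteq> 0}"
  shows "pdiff f i x = 0"
proof -
  have "(f has_derivative (\<lambda>h. 0)) (at x)"
  proof (rule has_derivative_transform_within_open[where s="- closure {y. f y \<noteq> 0}"])
    show "((\<lambda>y. 0) has_derivative (\<lambda>h. 0)) (at x)" by simp
    show "open (- closure {y. f y \<noteq> 0})" by auto
    show "x \<in> - closure {y. f y \<noteq> 0}" using assms by simp
    show "0 = f y" if "y \<in> - closure {y. f y \<noteq> 0}" for y
      using not_in_closure_support_imp_eq_0[of y f] that by simp
  qed
  from pdiff_eqI[OF this] show ?thesis .
qed

lemma closure_support_pdiff_subset:
  "closure {x. pdiff f i x \<noteq> 0} \<subseteq> closure {x. f x \<noteq> 0}"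
proof (rule closure_minimal)
  show "{x. pdiff f i x \<noteq> 0} \<subseteq> closure {x. f x \<noteq> 0}"
    using pdiff_eq_0_outside_closure_support by blast
qed simp

lemma has_real_derivative_along_line:
  fixes h :: "'a::euclidean_space \<Rightarrow> real"
  assumes "h differentiable (at (x + s *\<^sub>R e))"
  shows "((\<lambda>t. h (x + t *\<^sub>R e)) has_real_derivative frechet_derivative h (at (x + s *\<^sub>R e)) e) (at s)"
proof -
  let ?h' = "frechet_derivative h (at (x + s *\<^sub>R e))"
  have "((\<lambda>t. x + t *\<^sub>R e) has_derivative (\<lambda>t. t *\<^sub>R e)) (at s)"
    by (intro derivative_eq_intros) auto
  from has_derivative_compose[OF this frechet_derivative_works[THEN iffD1, OF assms]]
  have "((\<lambda>t. h (x + t *\<^sub>R e)) has_derivative (\<lambda>t. ?h' (t *\<^sub>R e))) (at s)" .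
  moreover have "(\<lambda>t. ?h' (t *\<^sub>R e)) = (*) (?h' e)"
    using linear_cmul[OF linear_frechet_derivative[OF assms]] by (auto simp: fun_eq_iff)
  ultimately show ?thesis unfolding has_field_derivative_def by simp
qed

section \<open>Integration by parts\<close>

lemma integral_lborel_translate:
  fixes f :: "'a::euclidean_space \<Rightarrow> 'b::{banach, second_countable_topology}"
  assumes [measurable]: "f \<in> borel_measurable borel"
  shows "integral\<^sup>L lborel (\<lambda>x. f (x + c)) = integral\<^sup>L lborel f"
    and "integrable lborel (\<lambda>x. f (x + c)) \<longleftrightarrow> integrable lborel f"
proof -
  have "integral\<^sup>L lborel (\<lambda>x. f (c + x)) = integral\<^sup>L (distr lborel borel ((+) c)) f"
    by (subst integral_distr) auto
  then show "integral\<^sup>L lborel (\<lambda>x. f (x + c)) = integral\<^sup>L lborel f"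
    by (simp add: lborel_distr_plus add.commute)
  have "integrable lborel (\<lambda>x. f (c + x)) \<longleftrightarrow> integrable (distr lborel borel ((+) c)) f"
    by (subst integrable_distr_eq) auto
  then show "integrable lborel (\<lambda>x. f (x + c)) \<longleftrightarrow> integrable lborel f"
    by (simp add: lborel_distr_plus add.commute)
qed

lemma difference_quotient_tendsto_pdiff:
  assumes "h differentiable (at x)" "s \<longlonglongrightarrow> 0" "\<And>k. s k \<noteq> 0"
  shows "(\<lambda>k. (h (x + s k *\<^sub>R axis i 1) - h x) / s k) \<longlonglongrightarrow> pdiff h i x"
proof -
  have "((\<lambda>t. h (x + t *\<^sub>R axis i 1)) has_real_derivative pdiff h i x) (at 0)"
    unfolding pdiff_def using has_real_derivative_along_line[of h x 0] assms(1) by simp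
  then have "((\<lambda>t. (h (x + t *\<^sub>R axis i 1) - h x) / t) \<longlongrightarrow> pdiff h i x) (at 0)"
    unfolding DERIV_def by simp
  with assms(2,3) show ?thesis
    unfolding tendsto_at_iff_sequentially by (auto simp: o_def)
qed

lemma abs_difference_quotient_le:
  fixes h :: "real^'n \<Rightarrow> real"
  assumes diff: "\<And>x. h differentiable (at x)" and B: "\<And>x. \<bar>pdiff h i x\<bar> \<le> B"
    and K: "\<And>x. x \<notin> K \<Longrightarrow> h x = 0" "\<And>x. x \<in> K \<Longrightarrow> norm x \<le> R"
    and s: "0 < s" "s \<le> 1"
  shows "\<bar>(h (x + s *\<^sub>R axis i 1) - h x) / s\<bar> \<le> B * indicator (cball 0 (R + 1)) x"
proof (cases "x \<in> cball 0 (R + 1)")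
  case True
  have "norm (h (x + s *\<^sub>R axis i 1) - h (x + 0 *\<^sub>R axis i 1)) \<le> B * norm (s - 0)"
  proof (rule field_differentiable_bound[where S=UNIV and f'="\<lambda>t. pdiff h i (x + t *\<^sub>R axis i 1)"])
    show "((\<lambda>t. h (x + t *\<^sub>R axis i 1)) has_field_derivative pdiff h i (x + t *\<^sub>R axis i 1))
        (at t within UNIV)" for t
      unfolding pdiff_def using has_real_derivative_along_line[OF diff] by simp
  qed (use B in auto)
  with True s show ?thesis by (simp add: divide_le_eq)
next
  case False
  then have "norm x > R + 1" by (simp add: dist_norm)
  moreover have "norm (s *\<^sub>R axis i 1 :: real^'n) \<le> 1" using s by (simp add: norm_axis_1)
  ultimately have "x \<notin> K" "x + s *\<^sub>R axis i 1 \<notin> K"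
    using K(2) norm_triangle_ineq4[of "x + s *\<^sub>R axis i 1" "s *\<^sub>R axis i 1"] by (fastforce, force)
  with False K(1) show ?thesis by simp
qed

text \<open>The difference quotients in direction \<open>i\<close> have integral zero by translation invariance and
  converge dominatedly to the partial derivative.\<close>

lemma integral_pdiff_eq_0:
  fixes h :: "real^'n \<Rightarrow> real"
  assumes diff: "\<And>x. h differentiable (at x)" and cont: "continuous_on UNIV (pdiff h i)"
    and K: "compact K" "\<And>x. x \<notin> K \<Longrightarrow> h x = 0"
  shows "integral\<^sup>L lborel (pdiff h i) = 0"
proof -
  define e :: "real^'n" where "e = axis i 1"
  have hcont: "continuous_on UNIV h"
    by (meson diff continuous_at_imp_continuous_on differentiable_imp_continuous_within)
  have [measurable]: "h \<in> borel_measurable borel" "pdiff h i \<in> borel_measurable borel"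
    by (intro borel_measurable_continuous_onI hcont cont)+
  have "closure {x. h x \<noteq> 0} \<subseteq> K"
    by (rule closure_minimal) (use K compact_imp_closed in auto)
  then have pdiff_out: "x \<notin> K \<Longrightarrow> pdiff h i x = 0" for x
    using pdiff_eq_0_outside_closure_support by blast
  obtain B where B: "\<And>x. \<bar>pdiff h i x\<bar> \<le> B"
  proof -
    obtain B0 where "\<And>y. y \<in> pdiff h i ` K \<Longrightarrow> norm y \<le> B0"
      using compact_imp_bounded[OF compact_continuous_image[OF continuous_on_subset[OF cont] K(1)]]
      unfolding bounded_iff by blast
    then have "\<bar>pdiff h i x\<bar> \<le> max B0 0" for x
      by (cases "x \<in> K") (force simp: pdiff_out)+
    then show thesis by (rule that)
  qed
  obtain R where R: "\<And>x. x \<in> K \<Longrightarrow> norm x \<le> R"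
    using compact_imp_bounded[OF K(1)] unfolding bounded_iff by blast
  define s :: "nat \<Rightarrow> real" where "s k = 1 / Suc k" for k
  have s: "0 < s k" "s k \<le> 1" for k unfolding s_def by auto
  have "s \<longlonglongrightarrow> 0"
    unfolding s_def using LIMSEQ_Suc[OF lim_inverse_n] by (simp add: inverse_eq_divide)
  define D where "D k x = (h (x + s k *\<^sub>R e) - h x) / s k" for k x
  have [measurable]: "D k \<in> borel_measurable lborel" for k
    unfolding D_def by measurable
  have integral_D: "integral\<^sup>L lborel (D k) = 0" for k
  proof -
    have "integrable lborel h"
      by (rule integrable_lborel_compact_support[OF K(1) hcont K(2)])
    with integral_lborel_translate[of h "s k *\<^sub>R e"] show ?thesis
      unfolding D_def by simp
  qed
  have dominated: "\<bar>D k x\<bar> \<le> B * indicator (cball 0 (R + 1)) x" for k x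
    unfolding D_def e_def by (rule abs_difference_quotient_le[OF diff B K(2) R s])
  have "(\<lambda>k. integral\<^sup>L lborel (D k)) \<longlonglongrightarrow> integral\<^sup>L lborel (pdiff h i)"
  proof (rule integral_dominated_convergence[where w="\<lambda>x. B * indicator (cball 0 (R + 1)) x"])
    have "integrable lborel (\<lambda>x. indicat_real (cball 0 (R + 1)) x *\<^sub>R (1::real))"
      by (rule borel_integrable_compact) auto
    then show "integrable lborel (\<lambda>x. B * indicat_real (cball 0 (R + 1)) x)" by auto
    show "AE x in lborel. (\<lambda>k. D k x) \<longlonglongrightarrow> pdiff h i x"
      unfolding D_def e_def
      using difference_quotient_tendsto_pdiff[OF diff \<open>s \<longlonglongrightarrow> 0\<close>] s by (simp add: less_imp_neq[symmetric])
  qed (use dominated in auto)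
  then show ?thesis using integral_D by (simp add: LIMSEQ_const_iff)
qed

definition laplacian :: "(real^'n \<Rightarrow> real) \<Rightarrow> real^'n \<Rightarrow> real" where
  "laplacian f x = (\<Sum>i\<in>UNIV. pdiff (pdiff f i) i x)"

lemma continuous_on_laplacian: "Cinf f \<Longrightarrow> continuous_on UNIV (laplacian f)"
  unfolding laplacian_def[abs_def] by (intro continuous_intros Cinf_continuous_on Cinf_pdiff)

lemma grad_eq_0_outside_closure_support: "x \<notin> closure {y. f y \<noteq> 0} \<Longrightarrow> grad f x = 0"
  unfolding grad_def by (simp add: vec_eq_iff pdiff_eq_0_outside_closure_support)

lemma laplacian_eq_0_outside_closure_support:
  assumes "x \<notin> closure {y. f y \<noteq> 0}"
  shows "laplacian f x = 0"
proof -
  have "x \<notin> closure {y. pdiff f i y \<noteq> 0}" for i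
    using assms closure_support_pdiff_subset by blast
  then show ?thesis unfolding laplacian_def by (simp add: pdiff_eq_0_outside_closure_support)
qed

lemma test_fun_cmult: "test_fun \<Omega> \<phi> \<Longrightarrow> test_fun \<Omega> (\<lambda>x. c * \<phi> x)"
  using Cinf_cmult[of \<phi> c] by (cases "c = 0") (simp_all add: test_fun_def)

lemma integral_pdiff_mult_pdiff:
  fixes \<psi> \<phi> :: "real^'n \<Rightarrow> real"
  assumes "Cinf \<psi>" "Cinf \<phi>" "compact K" "\<And>x. x \<notin> K \<Longrightarrow> \<phi> x = 0"
  shows "integral\<^sup>L lborel (\<lambda>x. pdiff \<psi> i x * pdiff \<phi> i x)
    = - integral\<^sup>L lborel (\<lambda>x. \<psi> x * pdiff (pdiff \<phi> i) i x)"
proof -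
  define g where "g = pdiff \<phi> i"
  have "Cinf g" unfolding g_def by (rule Cinf_pdiff[OF assms(2)])
  have "closure {x. \<phi> x \<noteq> 0} \<subseteq> K"
    by (rule closure_minimal) (use assms(3,4) compact_imp_closed in auto)
  then have supp: "closure {x. g x \<noteq> 0} \<subseteq> K"
    unfolding g_def using closure_support_pdiff_subset by blast
  then have g0: "x \<notin> K \<Longrightarrow> g x = 0" and g'0: "x \<notin> K \<Longrightarrow> pdiff g i x = 0" for x
    using not_in_closure_support_imp_eq_0 pdiff_eq_0_outside_closure_support by blast+
  have dpsi: "\<psi> differentiable (at x)" and dg: "g differentiable (at x)" for x
    using Cinf_differentiable assms(1) \<open>Cinf g\<close> by blast+
  have pdiff_prod: "pdiff (\<lambda>x. \<psi> x * g x) i = (\<lambda>x. pdiff \<psi> i x * g x + \<psi> x * pdiff g i x)"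
    by (rule ext) (rule pdiff_mult[OF dpsi dg])
  have c1: "continuous_on UNIV (\<lambda>x. pdiff \<psi> i x * g x)"
    and c2: "continuous_on UNIV (\<lambda>x. \<psi> x * pdiff g i x)"
    by (intro continuous_intros Cinf_continuous_on Cinf_pdiff assms \<open>Cinf g\<close>)+
  have i1: "integrable lborel (\<lambda>x. pdiff \<psi> i x * g x)"
    by (rule integrable_lborel_compact_support[OF assms(3) c1]) (simp add: g0)
  have i2: "integrable lborel (\<lambda>x. \<psi> x * pdiff g i x)"
    by (rule integrable_lborel_compact_support[OF assms(3) c2]) (simp add: g'0)
  have "integral\<^sup>L lborel (pdiff (\<lambda>x. \<psi> x * g x) i) = 0"
  proof (rule integral_pdiff_eq_0[OF _ _ assms(3)])
    show "(\<lambda>x. \<psi> x * g x) differentiable (at x)" for x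
      using dpsi dg by (intro derivative_intros)
    show "continuous_on UNIV (pdiff (\<lambda>x. \<psi> x * g x) i)"
      unfolding pdiff_prod by (intro continuous_intros c1 c2)
  qed (simp add: g0)
  then show ?thesis
    unfolding pdiff_prod g_def[symmetric] using i1 i2 by simp
qed

text \<open>Green's first identity; there is no boundary term because \<open>\<phi>\<close> has compact support in \<open>\<Omega>\<close>.\<close>

lemma integral_grad_inner_grad_test_fun:
  fixes \<Omega> :: "(real^'n) set"
  assumes "open \<Omega>" "Cinf \<psi>" "test_fun \<Omega> \<phi>"
  shows "integral\<^sup>L (restrict_space lborel \<Omega>) (\<lambda>x. grad \<psi> x \<bullet> grad \<phi> x)
     = - integral\<^sup>L (restrict_space lborel \<Omega>) (\<lambda>x. \<psi> x * laplacian \<phi> x)"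
proof -
  let ?K = "closure {x. \<phi> x \<noteq> 0}"
  have \<phi>: "Cinf \<phi>" "compact ?K" "?K \<subseteq> \<Omega>" using assms(3) unfolding test_fun_def by auto
  have i1: "integrable lborel (\<lambda>x. pdiff \<psi> i x * pdiff \<phi> i x)" for i
    by (rule integrable_lborel_compact_support[OF \<phi>(2)])
       (simp_all add: continuous_on_mult Cinf_continuous_on Cinf_pdiff assms(2) \<phi>(1)
         pdiff_eq_0_outside_closure_support)
  have i2: "integrable lborel (\<lambda>x. \<psi> x * pdiff (pdiff \<phi> i) i x)" for i
  proof (rule integrable_lborel_compact_support[OF \<phi>(2)])
    show "continuous_on UNIV (\<lambda>x. \<psi> x * pdiff (pdiff \<phi> i) i x)"
      by (intro continuous_on_mult Cinf_continuous_on Cinf_pdiff assms(2) \<phi>(1))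
    show "\<psi> x * pdiff (pdiff \<phi> i) i x = 0" if "x \<notin> ?K" for x
      using that closure_support_pdiff_subset[of \<phi> i]
      by (auto intro: pdiff_eq_0_outside_closure_support)
  qed
  have "integral\<^sup>L (restrict_space lborel \<Omega>) (\<lambda>x. grad \<psi> x \<bullet> grad \<phi> x)
      = integral\<^sup>L lborel (\<lambda>x. grad \<psi> x \<bullet> grad \<phi> x)"
    by (rule compact_support_restrict_space(2)[OF assms(1) \<phi>(2,3)])
       (simp_all add: grad_eq_0_outside_closure_support continuous_intros Cinf_continuous_on_grad assms(2) \<phi>(1))
  also have "\<dots> = (\<Sum>i\<in>UNIV. integral\<^sup>L lborel (\<lambda>x. pdiff \<psi> i x * pdiff \<phi> i x))"
    unfolding grad_def inner_vec_def using i1 by simp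
  also have "\<dots> = (\<Sum>i\<in>UNIV. - integral\<^sup>L lborel (\<lambda>x. \<psi> x * pdiff (pdiff \<phi> i) i x))"
    using integral_pdiff_mult_pdiff[OF assms(2) \<phi>(1,2) not_in_closure_support_imp_eq_0[of _ \<phi>]] by simp
  also have "\<dots> = - integral\<^sup>L lborel (\<lambda>x. \<psi> x * laplacian \<phi> x)"
    unfolding laplacian_def sum_distrib_left using i2 by (simp add: sum_negf)
  also have "\<dots> = - integral\<^sup>L (restrict_space lborel \<Omega>) (\<lambda>x. \<psi> x * laplacian \<phi> x)"
    by (subst compact_support_restrict_space(2)[OF assms(1) \<phi>(2,3)])
       (simp_all add: laplacian_eq_0_outside_closure_support continuous_intros Cinf_continuous_on
         continuous_on_laplacian assms(2) \<phi>(1))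
  finally show ?thesis .
qed

section \<open>A smooth bump function\<close>

text \<open>The classical bump \<open>s \<mapsto> exp (-1/s)\<close> (for \<open>s > 0\<close>, and \<open>0\<close> otherwise), multiplied by a
  polynomial in \<open>1/s\<close> so that the family is closed under differentiation.\<close>

definition exp_bump :: "real poly \<Rightarrow> real \<Rightarrow> real" where
  "exp_bump P s = (if s > 0 then poly P (1 / s) * exp (- (1 / s)) else 0)"

definition exp_bump_deriv_poly :: "real poly \<Rightarrow> real poly" where
  "exp_bump_deriv_poly P = [:0, 0, 1:] * (P - pderiv P)"

lemma poly_times_exp_neg_tendsto_0: "((\<lambda>y. poly (R::real poly) y * exp (- y)) \<longlongrightarrow> 0) at_top"
proof -
  have "((\<lambda>y. \<Sum>i\<le>degree R. coeff R i * (y ^ i / exp y)) \<longlongrightarrow> 0) at_top"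
    by (intro tendsto_null_sum tendsto_mult_right_zero tendsto_power_div_exp_0)
  moreover have "(\<Sum>i\<le>degree R. coeff R i * (y ^ i / exp y)) = poly R y * exp (- y)" for y :: real
    by (simp add: poly_altdef exp_minus divide_inverse sum_distrib_right mult.assoc)
  ultimately show ?thesis by simp
qed

lemma exp_bump_has_real_derivative_0: "(exp_bump P has_real_derivative 0) (at 0)"
proof -
  have "((\<lambda>h. exp_bump P h / h) \<longlongrightarrow> 0) (at_right 0)"
  proof (rule Lim_transform_eventually)
    show "((\<lambda>h. poly ([:0, 1:] * P) (inverse h) * exp (- inverse h)) \<longlongrightarrow> 0) (at_right 0)"
      using filterlim_compose[OF poly_times_exp_neg_tendsto_0[of "[:0, 1:] * P"] filterlim_inverse_at_top_right]
      by (simp add: o_def)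
    show "\<forall>\<^sub>F h in at_right 0. poly ([:0, 1:] * P) (inverse h) * exp (- inverse h) = exp_bump P h / h"
      using eventually_at_right_less[of 0] by eventually_elim (simp add: exp_bump_def field_simps)
  qed
  moreover have "((\<lambda>h. exp_bump P h / h) \<longlongrightarrow> 0) (at_left 0)"
  proof (rule Lim_transform_eventually[OF tendsto_const])
    show "\<forall>\<^sub>F h in at_left 0. 0 = exp_bump P h / h"
      unfolding eventually_at_left_field by (intro exI[of _ "-1"]) (simp add: exp_bump_def)
  qed
  ultimately have "((\<lambda>h. exp_bump P h / h) \<longlongrightarrow> 0) (at 0)"
    unfolding filterlim_at_split by simp
  then show ?thesis unfolding DERIV_def by (simp add: exp_bump_def)
qed

lemma exp_bump_has_real_derivative:
  "(exp_bump P has_real_derivative exp_bump (exp_bump_deriv_poly P) s) (at s)"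
proof (cases s "0::real" rule: linorder_cases)
  case greater
  define g where "g y = poly P (1 / y) * exp (- (1 / y))" for y
  have "(g has_real_derivative poly (pderiv P) (1 / s) * (- 1 / s\<^sup>2) * exp (- (1 / s))
      + poly P (1 / s) * (exp (- (1 / s)) * (1 / s\<^sup>2))) (at s)"
    unfolding g_def using greater
    by (auto intro!: derivative_eq_intros simp: field_simps power2_eq_square)
  moreover have "poly (pderiv P) (1 / s) * (- 1 / s\<^sup>2) * exp (- (1 / s))
      + poly P (1 / s) * (exp (- (1 / s)) * (1 / s\<^sup>2)) = exp_bump (exp_bump_deriv_poly P) s"
    using greater by (simp add: exp_bump_def exp_bump_deriv_poly_def field_simps power2_eq_square)
  ultimately have "(g has_real_derivative exp_bump (exp_bump_deriv_poly P) s) (at s)" by simp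
  then show ?thesis
    by (rule has_field_derivative_transform_within_open[of _ _ _ "{0<..}"])
       (use greater in \<open>auto simp: exp_bump_def g_def\<close>)
next
  case equal
  then show ?thesis using exp_bump_has_real_derivative_0[of P] by (simp add: exp_bump_def)
next
  case less
  have "((\<lambda>y. 0) has_real_derivative exp_bump (exp_bump_deriv_poly P) s) (at s)"
    using less by (simp add: exp_bump_def)
  then show ?thesis
    by (rule has_field_derivative_transform_within_open[of _ _ _ "{..<0}"])
       (use less in \<open>auto simp: exp_bump_def\<close>)
qed

lemma exp_bump_ball_has_derivative:
  fixes x0 :: "real^'n"
  shows "((\<lambda>y. exp_bump P (r\<^sup>2 - (y - x0) \<bullet> (y - x0))) has_derivative
     (\<lambda>h. exp_bump (exp_bump_deriv_poly P) (r\<^sup>2 - (x - x0) \<bullet> (x - x0)) * (- (2 * ((x - x0) \<bullet> h))))) (at x)"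
proof -
  have "((\<lambda>y. r\<^sup>2 - (y - x0) \<bullet> (y - x0)) has_derivative (\<lambda>h. - (2 * ((x - x0) \<bullet> h)))) (at x)"
    by (auto intro!: derivative_eq_intros simp: inner_commute algebra_simps)
  from has_derivative_compose[OF this exp_bump_has_real_derivative[unfolded has_field_derivative_def]]
  show ?thesis by simp
qed

text \<open>Functions built from constants, coordinates and the bumps \<open>exp_bump P (r\<^sup>2 - |x - x0|\<^sup>2)\<close>
  by sums and products; this algebra is closed under partial differentiation, which makes
  smoothness of its members a coinduction.\<close>

inductive bump_algebra :: "real^'n \<Rightarrow> real \<Rightarrow> (real^'n \<Rightarrow> real) \<Rightarrow> bool" for x0 r where
  const: "bump_algebra x0 r (\<lambda>x. c)"
| coord: "bump_algebra x0 r (\<lambda>x. x $ j)"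
| bump: "bump_algebra x0 r (\<lambda>x. exp_bump P (r\<^sup>2 - (x - x0) \<bullet> (x - x0)))"
| add: "bump_algebra x0 r f \<Longrightarrow> bump_algebra x0 r g \<Longrightarrow> bump_algebra x0 r (\<lambda>x. f x + g x)"
| mult: "bump_algebra x0 r f \<Longrightarrow> bump_algebra x0 r g \<Longrightarrow> bump_algebra x0 r (\<lambda>x. f x * g x)"

lemma bump_algebra_pdiff:
  fixes x0 :: "real^'n"
  assumes "bump_algebra x0 r f"
  shows "(\<forall>x. f differentiable (at x)) \<and> (\<forall>i. bump_algebra x0 r (pdiff f i))"
  using assms
proof (induction rule: bump_algebra.induct)
  case (const c)
  have "pdiff (\<lambda>x::real^'n. c) i = (\<lambda>x. 0)" for i
    by (rule ext) (rule pdiff_eqI[of _ "\<lambda>h. 0", simplified], simp)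
  then show ?case by (simp add: bump_algebra.const)
next
  case (coord j)
  have d: "((\<lambda>x::real^'n. x $ j) has_derivative (\<lambda>h. h $ j)) (at x)" for x
    by (rule bounded_linear_imp_has_derivative) (rule bounded_linear_vec_nth)
  then have "pdiff (\<lambda>x. x $ j) i = (\<lambda>x. axis i 1 $ j)" for i
    by (intro ext pdiff_eqI)
  with d show ?case by (auto intro: differentiableI bump_algebra.const)
next
  case (bump P)
  have pd: "pdiff (\<lambda>x. exp_bump P (r\<^sup>2 - (x - x0) \<bullet> (x - x0))) i = (\<lambda>x.
      exp_bump (exp_bump_deriv_poly P) (r\<^sup>2 - (x - x0) \<bullet> (x - x0)) * ((- 2) * x $ i + 2 * x0 $ i))" for i
    by (rule ext, subst pdiff_eqI[OF exp_bump_ball_has_derivative]) (simp add: inner_axis algebra_simps)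
  have "bump_algebra x0 r (pdiff (\<lambda>x. exp_bump P (r\<^sup>2 - (x - x0) \<bullet> (x - x0))) i)" for i
    unfolding pd by (intro bump_algebra.intros)
  moreover have "(\<lambda>x. exp_bump P (r\<^sup>2 - (x - x0) \<bullet> (x - x0))) differentiable (at x)" for x
    using exp_bump_ball_has_derivative by (rule differentiableI)
  ultimately show ?case by blast
next
  case (add f g)
  then have "pdiff (\<lambda>x. f x + g x) i = (\<lambda>x. pdiff f i x + pdiff g i x)" for i
    by (simp add: fun_eq_iff pdiff_add)
  with add.IH show ?case by (auto intro!: bump_algebra.add derivative_intros)
next
  case (mult f g)
  then have "pdiff (\<lambda>x. f x * g x) i = (\<lambda>x. pdiff f i x * g x + f x * pdiff g i x)" for i
    by (simp add: fun_eq_iff pdiff_mult)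
  with mult.IH mult.hyps show ?case
    by (auto intro!: bump_algebra.add bump_algebra.mult derivative_intros)
qed

lemma bump_algebra_Cinf: "bump_algebra x0 r f \<Longrightarrow> Cinf f"
proof (rule Cinf.coinduct[of "bump_algebra x0 r"])
  fix h assume "bump_algebra x0 r h"
  then show "\<exists>f. h = f \<and> (\<forall>x. f differentiable at x) \<and> (\<forall>i. bump_algebra x0 r (pdiff f i) \<or> Cinf (pdiff f i))"
    using bump_algebra_pdiff by blast
qed

lemma test_fun_pos_on_ball:
  fixes \<Omega> :: "(real^'n) set"
  assumes "open \<Omega>" "x0 \<in> \<Omega>"
  obtains \<phi> r where "test_fun \<Omega> \<phi>" "r > 0" "ball x0 r \<subseteq> \<Omega>" "\<And>x. \<phi> x \<ge> 0"
    "\<And>x. x \<in> ball x0 r \<Longrightarrow> \<phi> x > 0"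
proof -
  obtain e where "e > 0" "ball x0 e \<subseteq> \<Omega>" using assms open_contains_ball by blast
  define r where "r = e / 2"
  then have "r > 0" "cball x0 r \<subseteq> \<Omega>"
    using \<open>e > 0\<close> \<open>ball x0 e \<subseteq> \<Omega>\<close> cball_subset_ball_iff[of x0 r x0 e] by auto
  define \<phi> where "\<phi> x = exp_bump 1 (r\<^sup>2 - (x - x0) \<bullet> (x - x0))" for x
  have nonneg: "\<phi> x \<ge> 0" for x unfolding \<phi>_def exp_bump_def by simp
  have pos_iff: "\<phi> x > 0 \<longleftrightarrow> x \<in> ball x0 r" for x
  proof -
    have "r\<^sup>2 \<le> (norm (x - x0))\<^sup>2 \<longleftrightarrow> r \<le> norm (x - x0)"
      by (rule power_mono_iff) (use \<open>r > 0\<close> in auto)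
    then have "(x - x0) \<bullet> (x - x0) < r\<^sup>2 \<longleftrightarrow> norm (x - x0) < r"
      by (simp add: power2_norm_eq_inner[symmetric] not_le[symmetric])
    then show ?thesis unfolding \<phi>_def exp_bump_def by (simp add: dist_norm norm_minus_commute)
  qed
  have "{x. \<phi> x \<noteq> 0} = ball x0 r"
    using nonneg pos_iff by (auto simp: less_le)
  then have "closure {x. \<phi> x \<noteq> 0} = cball x0 r" using \<open>r > 0\<close> by simp
  moreover have "Cinf \<phi>" unfolding \<phi>_def by (rule bump_algebra_Cinf[OF bump_algebra.bump])
  ultimately have "test_fun \<Omega> \<phi>" unfolding test_fun_def using \<open>cball x0 r \<subseteq> \<Omega>\<close> by simp
  with that \<open>r > 0\<close> \<open>cball x0 r \<subseteq> \<Omega>\<close> nonneg pos_iff show ?thesis by force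
qed

section \<open>Weak gradients\<close>

lemma test_fun_in_L2:
  fixes \<Omega> :: "(real^'n) set"
  assumes "open \<Omega>" "test_fun \<Omega> \<phi>"
  shows "\<phi> \<in> borel_measurable (restrict_space lborel \<Omega>)"
    and "grad \<phi> \<in> borel_measurable (restrict_space lborel \<Omega>)"
    and "laplacian \<phi> \<in> borel_measurable (restrict_space lborel \<Omega>)"
    and "integrable (restrict_space lborel \<Omega>) (\<lambda>x. (\<phi> x)\<^sup>2)"
    and "integrable (restrict_space lborel \<Omega>) (\<lambda>x. (norm (grad \<phi> x))\<^sup>2)"
    and "integrable (restrict_space lborel \<Omega>) (\<lambda>x. (laplacian \<phi> x)\<^sup>2)"
proof -
  let ?K = "closure {x. \<phi> x \<noteq> 0}"
  have \<phi>: "Cinf \<phi>" "compact ?K" "?K \<subseteq> \<Omega>" using assms(2) unfolding test_fun_def by auto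
  note cont = Cinf_continuous_on[OF \<phi>(1)] Cinf_continuous_on_grad[OF \<phi>(1)] continuous_on_laplacian[OF \<phi>(1)]
  show "\<phi> \<in> borel_measurable (restrict_space lborel \<Omega>)"
    "grad \<phi> \<in> borel_measurable (restrict_space lborel \<Omega>)"
    "laplacian \<phi> \<in> borel_measurable (restrict_space lborel \<Omega>)"
    using cont by (simp_all add: continuous_on_borel_measurable_restrict_space)
  show "integrable (restrict_space lborel \<Omega>) (\<lambda>x. (\<phi> x)\<^sup>2)"
  proof (rule compact_support_restrict_space(1)[OF assms(1) \<phi>(2,3)])
    show "continuous_on UNIV (\<lambda>x. (\<phi> x)\<^sup>2)" using cont(1) by (rule continuous_on_power)
    show "(\<phi> x)\<^sup>2 = 0" if "x \<notin> ?K" for x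
      using not_in_closure_support_imp_eq_0[OF that] by simp
  qed
  show "integrable (restrict_space lborel \<Omega>) (\<lambda>x. (norm (grad \<phi> x))\<^sup>2)"
  proof (rule compact_support_restrict_space(1)[OF assms(1) \<phi>(2,3)])
    show "continuous_on UNIV (\<lambda>x. (norm (grad \<phi> x))\<^sup>2)"
      using cont(2) by (intro continuous_on_power continuous_on_norm)
    show "(norm (grad \<phi> x))\<^sup>2 = 0" if "x \<notin> ?K" for x
      using grad_eq_0_outside_closure_support[OF that] by simp
  qed
  show "integrable (restrict_space lborel \<Omega>) (\<lambda>x. (laplacian \<phi> x)\<^sup>2)"
  proof (rule compact_support_restrict_space(1)[OF assms(1) \<phi>(2,3)])
    show "continuous_on UNIV (\<lambda>x. (laplacian \<phi> x)\<^sup>2)" using cont(3) by (rule continuous_on_power)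
    show "(laplacian \<phi> x)\<^sup>2 = 0" if "x \<notin> ?K" for x
      using laplacian_eq_0_outside_closure_support[OF that] by simp
  qed
qed

lemma H01_restrict_space:
  fixes \<Omega> :: "(real^'n) set"
  assumes "open \<Omega>"
  shows "H01 \<Omega> u G \<longleftrightarrow>
    u \<in> borel_measurable (restrict_space lborel \<Omega>) \<and> G \<in> borel_measurable (restrict_space lborel \<Omega>) \<and>
    integrable (restrict_space lborel \<Omega>) (\<lambda>x. (u x)\<^sup>2) \<and>
    integrable (restrict_space lborel \<Omega>) (\<lambda>x. (norm (G x))\<^sup>2) \<and>
    (\<exists>\<psi>. (\<forall>k. test_fun \<Omega> (\<psi> k)) \<and>
      (\<lambda>k. integral\<^sup>L (restrict_space lborel \<Omega>) (\<lambda>x. (\<psi> k x - u x)\<^sup>2)) \<longlonglongrightarrow> 0 \<and>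
      (\<lambda>k. integral\<^sup>L (restrict_space lborel \<Omega>) (\<lambda>x. (norm (grad (\<psi> k) x - G x))\<^sup>2)) \<longlonglongrightarrow> 0)"
  unfolding H01_def set_lborel_conv_restrict_space[OF assms] ..

lemma H01_scaleR:
  fixes \<Omega> :: "(real^'n) set"
  assumes "open \<Omega>" "H01 \<Omega> u G"
  shows "H01 \<Omega> (\<lambda>x. c * u x) (\<lambda>x. c *\<^sub>R G x)"
proof -
  let ?M = "restrict_space lborel \<Omega>"
  note H = assms(2)[unfolded H01_restrict_space[OF assms(1)]]
  then obtain \<psi> where tf: "\<And>k. test_fun \<Omega> (\<psi> k)"
    and l1: "(\<lambda>k. integral\<^sup>L ?M (\<lambda>x. (\<psi> k x - u x)\<^sup>2)) \<longlonglongrightarrow> 0"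
    and l2: "(\<lambda>k. integral\<^sup>L ?M (\<lambda>x. (norm (grad (\<psi> k) x - G x))\<^sup>2)) \<longlonglongrightarrow> 0"
    by blast
  have "Cinf (\<psi> k)" for k using tf unfolding test_fun_def by blast
  then have "(\<lambda>x. (norm (grad (\<lambda>y. c * \<psi> k y) x - c *\<^sub>R G x))\<^sup>2)
      = (\<lambda>x. c\<^sup>2 * (norm (grad (\<psi> k) x - G x))\<^sup>2)" for k
    by (simp add: grad_cmult scaleR_diff_right[symmetric] power_mult_distrib)
  moreover have "(\<lambda>x. (c * \<psi> k x - c * u x)\<^sup>2) = (\<lambda>x. c\<^sup>2 * (\<psi> k x - u x)\<^sup>2)" for k
    by (simp add: power_mult_distrib right_diff_distrib[symmetric])
  ultimately have "(\<lambda>k. integral\<^sup>L ?M (\<lambda>x. (c * \<psi> k x - c * u x)\<^sup>2)) \<longlonglongrightarrow> 0"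
    "(\<lambda>k. integral\<^sup>L ?M (\<lambda>x. (norm (grad (\<lambda>y. c * \<psi> k y) x - c *\<^sub>R G x))\<^sup>2)) \<longlonglongrightarrow> 0"
    using tendsto_mult_right_zero[OF l1, of "c\<^sup>2"] tendsto_mult_right_zero[OF l2, of "c\<^sup>2"] by simp_all
  moreover have "integrable ?M (\<lambda>x. (c * u x)\<^sup>2)" "integrable ?M (\<lambda>x. (norm (c *\<^sub>R G x))\<^sup>2)"
  proof -
    have "integrable ?M (\<lambda>x. c\<^sup>2 * (u x)\<^sup>2)" "integrable ?M (\<lambda>x. c\<^sup>2 * (norm (G x))\<^sup>2)"
      using H by auto
    then show "integrable ?M (\<lambda>x. (c * u x)\<^sup>2)" "integrable ?M (\<lambda>x. (norm (c *\<^sub>R G x))\<^sup>2)"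
      by (simp_all add: power_mult_distrib)
  qed
  ultimately show ?thesis
    unfolding H01_restrict_space[OF assms(1)] using H test_fun_cmult[OF tf]
    by (intro conjI exI[of _ "\<lambda>k x. c * \<psi> k x"]) (auto simp: measurable_restrict_space1)
qed

lemma H01_integral_grad_inner_grad_test_fun:
  fixes \<Omega> :: "(real^'n) set"
  assumes "open \<Omega>" "H01 \<Omega> u G" "test_fun \<Omega> \<phi>"
  shows "integral\<^sup>L (restrict_space lborel \<Omega>) (\<lambda>x. G x \<bullet> grad \<phi> x)
     = - integral\<^sup>L (restrict_space lborel \<Omega>) (\<lambda>x. u x * laplacian \<phi> x)"
proof -
  let ?M = "restrict_space lborel \<Omega>"
  note H = assms(2)[unfolded H01_restrict_space[OF assms(1)]]
  then obtain \<psi> where tf: "\<And>k. test_fun \<Omega> (\<psi> k)"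
    and l1: "(\<lambda>k. integral\<^sup>L ?M (\<lambda>x. (\<psi> k x - u x)\<^sup>2)) \<longlonglongrightarrow> 0"
    and l2: "(\<lambda>k. integral\<^sup>L ?M (\<lambda>x. (norm (grad (\<psi> k) x - G x))\<^sup>2)) \<longlonglongrightarrow> 0"
    by blast
  have [measurable]: "u \<in> borel_measurable ?M" "G \<in> borel_measurable ?M"
    and iu: "integrable ?M (\<lambda>x. (u x)\<^sup>2)" and iG: "integrable ?M (\<lambda>x. (norm (G x))\<^sup>2)"
    using H by auto
  note \<psi>_L2 = test_fun_in_L2[OF assms(1) tf] and \<phi>_L2 = test_fun_in_L2[OF assms(1,3)]
  have "(\<lambda>k. integral\<^sup>L ?M (\<lambda>x. grad (\<psi> k) x \<bullet> grad \<phi> x)) \<longlonglongrightarrow> integral\<^sup>L ?M (\<lambda>x. G x \<bullet> grad \<phi> x)"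
    by (rule integral_inner_L2_tendsto[OF \<psi>_L2(2) _ \<phi>_L2(2) \<psi>_L2(5) iG \<phi>_L2(5) l2]) measurable
  moreover have "(\<lambda>k. integral\<^sup>L ?M (\<lambda>x. \<psi> k x \<bullet> laplacian \<phi> x)) \<longlonglongrightarrow> integral\<^sup>L ?M (\<lambda>x. u x \<bullet> laplacian \<phi> x)"
    by (rule integral_inner_L2_tendsto[OF \<psi>_L2(1) _ \<phi>_L2(3)]) (use \<psi>_L2(4) iu \<phi>_L2(6) l1 in simp_all)
  then have "(\<lambda>k. integral\<^sup>L ?M (\<lambda>x. grad (\<psi> k) x \<bullet> grad \<phi> x))
      \<longlonglongrightarrow> - integral\<^sup>L ?M (\<lambda>x. u x * laplacian \<phi> x)"
    unfolding integral_grad_inner_grad_test_fun[OF assms(1) tf[unfolded test_fun_def, THEN conjunct1] assms(3)]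
    by (simp add: tendsto_minus)
  ultimately show ?thesis by (rule LIMSEQ_unique)
qed

text \<open>Gradients of test functions are dense among weak gradients.\<close>

lemma H01_integral_inner_eq_0:
  fixes \<Omega> :: "(real^'n) set" and F :: "real^'n \<Rightarrow> real^'n"
  assumes "open \<Omega>" "H01 \<Omega> u G"
    and [measurable]: "F \<in> borel_measurable (restrict_space lborel \<Omega>)"
    and iF: "integrable (restrict_space lborel \<Omega>) (\<lambda>x. (norm (F x))\<^sup>2)"
    and orth: "\<And>\<phi>. test_fun \<Omega> \<phi> \<Longrightarrow> integral\<^sup>L (restrict_space lborel \<Omega>) (\<lambda>x. F x \<bullet> grad \<phi> x) = 0"
  shows "integral\<^sup>L (restrict_space lborel \<Omega>) (\<lambda>x. G x \<bullet> F x) = 0"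
proof -
  let ?M = "restrict_space lborel \<Omega>"
  note H = assms(2)[unfolded H01_restrict_space[OF assms(1)]]
  then obtain \<psi> where tf: "\<And>k. test_fun \<Omega> (\<psi> k)"
    and l2: "(\<lambda>k. integral\<^sup>L ?M (\<lambda>x. (norm (grad (\<psi> k) x - G x))\<^sup>2)) \<longlonglongrightarrow> 0"
    by blast
  note \<psi>_L2 = test_fun_in_L2[OF assms(1) tf]
  have "(\<lambda>k. integral\<^sup>L ?M (\<lambda>x. grad (\<psi> k) x \<bullet> F x)) \<longlonglongrightarrow> integral\<^sup>L ?M (\<lambda>x. G x \<bullet> F x)"
    by (rule integral_inner_L2_tendsto[OF \<psi>_L2(2) _ _ \<psi>_L2(5) _ iF l2]) (use H in auto)
  moreover have "integral\<^sup>L ?M (\<lambda>x. grad (\<psi> k) x \<bullet> F x) = 0" for k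
    using orth[OF tf[of k]] by (simp add: inner_commute)
  ultimately show ?thesis by (simp add: LIMSEQ_const_iff)
qed

lemma H01_gradient_unique:
  fixes \<Omega> :: "(real^'n) set"
  assumes "open \<Omega>" "H01 \<Omega> u G" "H01 \<Omega> u G'"
  shows "AE x in restrict_space lborel \<Omega>. G' x = G x"
proof -
  let ?M = "restrict_space lborel \<Omega>"
  define F where "F x = G' x - G x" for x
  have [measurable]: "G \<in> borel_measurable ?M" "G' \<in> borel_measurable ?M"
    and iG: "integrable ?M (\<lambda>x. (norm (G x))\<^sup>2)" and iG': "integrable ?M (\<lambda>x. (norm (G' x))\<^sup>2)"
    using assms(2,3) unfolding H01_restrict_space[OF assms(1)] by auto
  have [measurable]: "F \<in> borel_measurable ?M" unfolding F_def by measurable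
  have iF: "integrable ?M (\<lambda>x. (norm (F x))\<^sup>2)"
    unfolding F_def by (rule square_integrable_diff[OF _ _ iG' iG]) measurable
  have orth: "integral\<^sup>L ?M (\<lambda>x. F x \<bullet> grad \<phi> x) = 0" if "test_fun \<Omega> \<phi>" for \<phi>
  proof -
    note \<phi>_L2 = test_fun_in_L2[OF assms(1) that]
    have "integrable ?M (\<lambda>x. G x \<bullet> grad \<phi> x)"
      by (rule integrable_inner_square_integrable[OF _ \<phi>_L2(2) iG \<phi>_L2(5)]) measurable
    moreover have "integrable ?M (\<lambda>x. G' x \<bullet> grad \<phi> x)"
      by (rule integrable_inner_square_integrable[OF _ \<phi>_L2(2) iG' \<phi>_L2(5)]) measurable
    ultimately show ?thesis
      using H01_integral_grad_inner_grad_test_fun[OF assms(1) _ that] assms(2,3)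
      unfolding F_def by (simp add: inner_diff_left)
  qed
  have "integrable ?M (\<lambda>x. G x \<bullet> F x)"
    by (rule integrable_inner_square_integrable[OF _ _ iG iF]) measurable
  moreover have "integrable ?M (\<lambda>x. G' x \<bullet> F x)"
    by (rule integrable_inner_square_integrable[OF _ _ iG' iF]) measurable
  moreover have "integral\<^sup>L ?M (\<lambda>x. G x \<bullet> F x) = 0" "integral\<^sup>L ?M (\<lambda>x. G' x \<bullet> F x) = 0"
    using H01_integral_inner_eq_0[OF assms(1) _ _ iF orth] assms(2,3) by auto
  ultimately have "integral\<^sup>L ?M (\<lambda>x. (norm (F x))\<^sup>2) = 0"
    unfolding power2_norm_eq_inner by (simp add: F_def inner_diff_left)
  then have "AE x in ?M. (norm (F x))\<^sup>2 = 0"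
    using integral_nonneg_eq_0_iff_AE[OF iF] by simp
  then show ?thesis by eventually_elim (simp add: F_def)
qed

section \<open>Scaling of solutions\<close>

lemma weak_sol_with_restrict_space:
  fixes \<Omega> :: "(real^'n) set"
  assumes "open \<Omega>"
  shows "weak_sol_with M lam mu q p \<Omega> u G \<longleftrightarrow> H01 \<Omega> u G \<and> (AE x in restrict_space lborel \<Omega>. u x > 0) \<and>
     (\<forall>\<phi>. test_fun \<Omega> \<phi> \<longrightarrow>
        integrable (restrict_space lborel \<Omega>) (\<lambda>x. G x \<bullet> grad \<phi> x) \<and>
        integrable (restrict_space lborel \<Omega>) (\<lambda>x. (lam * u x powr (q - 1) + mu * u x powr (p - 1)) * \<phi> x) \<and>
        M (integral\<^sup>L (restrict_space lborel \<Omega>) (\<lambda>x. (norm (G x))\<^sup>2)) *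
          integral\<^sup>L (restrict_space lborel \<Omega>) (\<lambda>x. G x \<bullet> grad \<phi> x) =
        integral\<^sup>L (restrict_space lborel \<Omega>) (\<lambda>x. (lam * u x powr (q - 1) + mu * u x powr (p - 1)) * \<phi> x))"
  unfolding weak_sol_with_def dirichlet_def set_lborel_conv_restrict_space[OF assms] ..

lemma weak_sol_with_gradient_cong:
  fixes \<Omega> :: "(real^'n) set"
  assumes "open \<Omega>" "H01 \<Omega> u G" "H01 \<Omega> u G'"
  shows "weak_sol_with M lam mu q p \<Omega> u G' \<longleftrightarrow> weak_sol_with M lam mu q p \<Omega> u G"
proof -
  let ?M = "restrict_space lborel \<Omega>"
  have ae: "AE x in ?M. G' x = G x" by (rule H01_gradient_unique[OF assms])
  have [measurable]: "G \<in> borel_measurable ?M" "G' \<in> borel_measurable ?M"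
    using assms(2,3) unfolding H01_restrict_space[OF assms(1)] by auto
  have "integral\<^sup>L ?M (\<lambda>x. (norm (G' x))\<^sup>2) = integral\<^sup>L ?M (\<lambda>x. (norm (G x))\<^sup>2)"
    by (rule integral_cong_AE) (use ae in auto)
  moreover have "integrable ?M (\<lambda>x. G' x \<bullet> grad \<phi> x) \<longleftrightarrow> integrable ?M (\<lambda>x. G x \<bullet> grad \<phi> x)"
    and "integral\<^sup>L ?M (\<lambda>x. G' x \<bullet> grad \<phi> x) = integral\<^sup>L ?M (\<lambda>x. G x \<bullet> grad \<phi> x)"
    if "test_fun \<Omega> \<phi>" for \<phi>
    using test_fun_in_L2(2)[OF assms(1) that]
    by (intro integrable_cong_AE integral_cong_AE; use ae in \<open>auto elim: AE_mp\<close>)+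
  ultimately show ?thesis
    unfolding weak_sol_with_restrict_space[OF assms(1)] using assms(2,3) by auto
qed

lemma dirichlet_pos_of_weak_sol:
  fixes \<Omega> :: "(real^'n) set"
  assumes "open \<Omega>" "\<Omega> \<noteq> {}" "weak_sol_with M lam mu q p \<Omega> u G" "lam \<ge> 0" "mu > 0"
  shows "dirichlet \<Omega> G > 0"
proof (rule ccontr)
  let ?M = "restrict_space lborel \<Omega>"
  let ?f = "\<lambda>x. lam * u x powr (q - 1) + mu * u x powr (p - 1)"
  assume "\<not> dirichlet \<Omega> G > 0"
  moreover have "0 \<le> integral\<^sup>L ?M (\<lambda>x. (norm (G x))\<^sup>2)" by simp
  ultimately have D0: "integral\<^sup>L ?M (\<lambda>x. (norm (G x))\<^sup>2) = 0"
    unfolding dirichlet_def set_lborel_conv_restrict_space[OF assms(1)] by linarith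
  note S = assms(3)[unfolded weak_sol_with_restrict_space[OF assms(1)]]
  have H: "G \<in> borel_measurable ?M" "integrable ?M (\<lambda>x. (norm (G x))\<^sup>2)"
    and upos: "AE x in ?M. u x > 0"
    using S unfolding H01_restrict_space[OF assms(1)] by auto
  obtain x0 where "x0 \<in> \<Omega>" using assms(2) by blast
  then obtain \<phi> r where \<phi>: "test_fun \<Omega> \<phi>" "r > 0" "ball x0 r \<subseteq> \<Omega>" "\<And>x. \<phi> x \<ge> 0"
    "\<And>x. x \<in> ball x0 r \<Longrightarrow> \<phi> x > 0"
    using test_fun_pos_on_ball[OF assms(1)] by metis
  note \<phi>_L2 = test_fun_in_L2[OF assms(1) \<phi>(1)]
  have eq: "M 0 * integral\<^sup>L ?M (\<lambda>x. G x \<bullet> grad \<phi> x) = integral\<^sup>L ?M (\<lambda>x. ?f x * \<phi> x)"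
    and int: "integrable ?M (\<lambda>x. ?f x * \<phi> x)"
    using S \<phi>(1) D0 by auto
  have "\<bar>integral\<^sup>L ?M (\<lambda>x. G x \<bullet> grad \<phi> x)\<bar> \<le> sqrt 0 * sqrt (integral\<^sup>L ?M (\<lambda>x. (norm (grad \<phi> x))\<^sup>2))"
    using Cauchy_Schwarz_integral_inner[OF H(1) \<phi>_L2(2) H(2) \<phi>_L2(5)] D0 by simp
  with eq have "integral\<^sup>L ?M (\<lambda>x. ?f x * \<phi> x) = 0" by simp
  moreover have "AE x in ?M. 0 \<le> ?f x * \<phi> x"
    using upos by eventually_elim (use \<phi>(4) assms(4,5) in auto)
  ultimately have "AE x in ?M. ?f x * \<phi> x = 0"
    using integral_nonneg_eq_0_iff_AE[OF int] by simp
  then have "AE x in ?M. x \<notin> ball x0 r"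
    using upos
  proof eventually_elim
    case (elim x)
    then have "?f x > 0" using assms(4,5) by (intro add_nonneg_pos) auto
    with elim(1) \<phi>(5)[of x] show "x \<notin> ball x0 r" by auto
  qed
  with not_AE_restrict_space_notin_ball[OF assms(1) \<phi>(3,2)] show False by blast
qed

lemma exists_test_fun_integral_grad_neq_0:
  fixes \<Omega> :: "(real^'n) set"
  assumes "open \<Omega>" "H01 \<Omega> u G" "dirichlet \<Omega> G \<noteq> 0"
  obtains \<phi> where "test_fun \<Omega> \<phi>" "integral\<^sup>L (restrict_space lborel \<Omega>) (\<lambda>x. G x \<bullet> grad \<phi> x) \<noteq> 0"
proof (rule ccontr)
  assume "\<not> thesis"
  with that have "integral\<^sup>L (restrict_space lborel \<Omega>) (\<lambda>x. G x \<bullet> grad \<phi> x) = 0"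
    if "test_fun \<Omega> \<phi>" for \<phi>
    using that by blast
  moreover have "G \<in> borel_measurable (restrict_space lborel \<Omega>)"
    "integrable (restrict_space lborel \<Omega>) (\<lambda>x. (norm (G x))\<^sup>2)"
    using assms(2) unfolding H01_restrict_space[OF assms(1)] by auto
  ultimately have "integral\<^sup>L (restrict_space lborel \<Omega>) (\<lambda>x. G x \<bullet> G x) = 0"
    using H01_integral_inner_eq_0[OF assms(1,2), of G] by blast
  with assms(3) show False
    by (simp add: dirichlet_def set_lborel_conv_restrict_space[OF assms(1)] power2_norm_eq_inner)
qed

lemma sol_Kirchhoff_iff_weak_sol_with:
  fixes \<Omega> :: "(real^'n) set"
  assumes "open \<Omega>" "H01 \<Omega> u G"
  shows "sol_Kirchhoff a b lam mu q p \<Omega> u \<longleftrightarrow> weak_sol_with (\<lambda>D. a + b * D) lam mu q p \<Omega> u G"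
proof
  assume "sol_Kirchhoff a b lam mu q p \<Omega> u"
  then obtain G' where sol: "weak_sol_with (\<lambda>D. a + b * D) lam mu q p \<Omega> u G'"
    unfolding sol_Kirchhoff_def by blast
  then have "H01 \<Omega> u G'" unfolding weak_sol_with_def by blast
  with sol show "weak_sol_with (\<lambda>D. a + b * D) lam mu q p \<Omega> u G"
    using weak_sol_with_gradient_cong[OF assms] by blast
qed (auto simp: sol_Kirchhoff_def)

lemma scaled_nonlinearity:
  fixes t v :: real
  assumes "t > 0" "v > 0" "lam * t powr (q - 1) = mu * t powr (p - 1) * \<alpha>"
  shows "lam * (t * v) powr (q - 1) + mu * (t * v) powr (p - 1)
    = mu * t powr (p - 1) * (\<alpha> * v powr (q - 1) + 1 * v powr (p - 1))"
proof -
  have "lam * (t * v) powr (q - 1) + mu * (t * v) powr (p - 1)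
      = (lam * t powr (q - 1)) * v powr (q - 1) + mu * t powr (p - 1) * v powr (p - 1)"
    using assms(1,2) by (simp add: powr_mult)
  then show ?thesis unfolding assms(3) by (simp add: algebra_simps)
qed

lemma integral_scaled_nonlinearity:
  fixes u \<phi> :: "'a \<Rightarrow> real"
  assumes upos: "AE x in M. u x > 0" and [measurable]: "u \<in> borel_measurable M" "\<phi> \<in> borel_measurable M"
    and "t > 0" and balance: "lam * t powr (q - 1) = mu * t powr (p - 1) * \<alpha>"
    and int: "integrable M (\<lambda>x. (\<alpha> * u x powr (q - 1) + 1 * u x powr (p - 1)) * \<phi> x)"
  shows "integrable M (\<lambda>x. (lam * (t * u x) powr (q - 1) + mu * (t * u x) powr (p - 1)) * \<phi> x)"
    and "integral\<^sup>L M (\<lambda>x. (lam * (t * u x) powr (q - 1) + mu * (t * u x) powr (p - 1)) * \<phi> x)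
      = mu * t powr (p - 1) * integral\<^sup>L M (\<lambda>x. (\<alpha> * u x powr (q - 1) + 1 * u x powr (p - 1)) * \<phi> x)"
proof -
  let ?f = "\<lambda>x. (\<alpha> * u x powr (q - 1) + 1 * u x powr (p - 1)) * \<phi> x"
  let ?g = "\<lambda>x. (lam * (t * u x) powr (q - 1) + mu * (t * u x) powr (p - 1)) * \<phi> x"
  have ae: "AE x in M. ?g x = mu * t powr (p - 1) * ?f x"
    using upos by eventually_elim (simp add: scaled_nonlinearity[OF \<open>t > 0\<close> _ balance])
  show "integrable M ?g"
    using integrable_cong_AE[of ?g M "\<lambda>x. mu * t powr (p - 1) * ?f x"] ae int by simp
  show "integral\<^sup>L M ?g = mu * t powr (p - 1) * integral\<^sup>L M ?f"
    using integral_cong_AE[of ?g M "\<lambda>x. mu * t powr (p - 1) * ?f x"] ae by simp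
qed

text \<open>Both weak formulations become multiples of \<open>\<integral> G \<bullet> \<nabla>\<phi>\<close>; positivity of the Dirichlet
  integral provides a test function for which this integral is nonzero and can be cancelled.\<close>

lemma weak_sol_with_scaled_iff:
  fixes \<Omega> :: "(real^'n) set"
  assumes "open \<Omega>" "\<Omega> \<noteq> {}" "sol_P \<alpha> q p \<Omega> u G" "\<alpha> \<ge> 0" "t > 0"
    and balance: "lam * t powr (q - 1) = mu * t powr (p - 1) * \<alpha>"
  shows "weak_sol_with M lam mu q p \<Omega> (\<lambda>x. t * u x) (\<lambda>x. t *\<^sub>R G x)
    \<longleftrightarrow> M (t\<^sup>2 * dirichlet \<Omega> G) * t = mu * t powr (p - 1)"
proof -
  let ?M = "restrict_space lborel \<Omega>"
  let ?f = "\<lambda>x. \<alpha> * u x powr (q - 1) + 1 * u x powr (p - 1)"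
  let ?g = "\<lambda>x. lam * (t * u x) powr (q - 1) + mu * (t * u x) powr (p - 1)"
  let ?I = "\<lambda>\<phi>. integral\<^sup>L ?M (\<lambda>x. G x \<bullet> grad \<phi> x)"
  define K where "K = mu * t powr (p - 1)"
  note S = assms(3)[unfolded sol_P_def weak_sol_with_restrict_space[OF assms(1)]]
  have H: "H01 \<Omega> u G" and upos: "AE x in ?M. u x > 0" using S by auto
  have [measurable]: "u \<in> borel_measurable ?M"
    using H unfolding H01_restrict_space[OF assms(1)] by auto
  have dirichlet_scaled: "integral\<^sup>L ?M (\<lambda>x. (norm (t *\<^sub>R G x))\<^sup>2) = t\<^sup>2 * dirichlet \<Omega> G"
    by (simp add: dirichlet_def set_lborel_conv_restrict_space[OF assms(1)] power_mult_distrib)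
  have test_eq_iff: "(integrable ?M (\<lambda>x. t *\<^sub>R G x \<bullet> grad \<phi> x) \<and> integrable ?M (\<lambda>x. ?g x * \<phi> x) \<and>
        M (t\<^sup>2 * dirichlet \<Omega> G) * integral\<^sup>L ?M (\<lambda>x. t *\<^sub>R G x \<bullet> grad \<phi> x) = integral\<^sup>L ?M (\<lambda>x. ?g x * \<phi> x))
      \<longleftrightarrow> (M (t\<^sup>2 * dirichlet \<Omega> G) * t - K) * ?I \<phi> = 0"
    if "test_fun \<Omega> \<phi>" for \<phi>
  proof -
    have iG: "integrable ?M (\<lambda>x. G x \<bullet> grad \<phi> x)"
      and int: "integrable ?M (\<lambda>x. ?f x * \<phi> x)" and eq: "?I \<phi> = integral\<^sup>L ?M (\<lambda>x. ?f x * \<phi> x)"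
      using S that by auto
    note integral_scaled_nonlinearity[OF upos _ test_fun_in_L2(1)[OF assms(1) that] \<open>t > 0\<close> balance int]
    then have "integrable ?M (\<lambda>x. ?g x * \<phi> x)" "integral\<^sup>L ?M (\<lambda>x. ?g x * \<phi> x) = K * ?I \<phi>"
      unfolding K_def eq by simp_all
    with iG show ?thesis by (simp add: algebra_simps)
  qed
  have "dirichlet \<Omega> G \<noteq> 0"
    using dirichlet_pos_of_weak_sol[OF assms(1,2) assms(3)[unfolded sol_P_def] assms(4)] by simp
  then obtain \<phi>0 where "test_fun \<Omega> \<phi>0" "?I \<phi>0 \<noteq> 0"
    using exists_test_fun_integral_grad_neq_0[OF assms(1) H] by blast
  then have "(\<forall>\<phi>. test_fun \<Omega> \<phi> \<longrightarrow> (M (t\<^sup>2 * dirichlet \<Omega> G) * t - K) * ?I \<phi> = 0)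
      \<longleftrightarrow> M (t\<^sup>2 * dirichlet \<Omega> G) * t = K"
    by auto
  moreover have "H01 \<Omega> (\<lambda>x. t * u x) (\<lambda>x. t *\<^sub>R G x)" by (rule H01_scaleR[OF assms(1) H])
  moreover have "AE x in ?M. t * u x > 0" using upos by eventually_elim (simp add: \<open>t > 0\<close>)
  ultimately show ?thesis
    unfolding weak_sol_with_restrict_space[OF assms(1)] dirichlet_scaled K_def[symmetric]
    using test_eq_iff by auto
qed

lemma powr_balance:
  fixes lam mu \<alpha> p q :: real
  assumes "q < p" "lam > 0" "mu > 0" "\<alpha> > 0"
  defines "t \<equiv> (lam / (\<alpha> * mu)) powr (1 / (p - q))"
  shows "lam * t powr (q - 1) = mu * t powr (p - 1) * \<alpha>"
proof -
  have "t powr (p - q) = lam / (\<alpha> * mu)"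
    using assms by (simp add: t_def powr_powr)
  moreover have "t powr (p - 1) = t powr (q - 1) * t powr (p - q)"
    by (simp add: powr_add[symmetric])
  ultimately show ?thesis using assms by (simp add: field_simps)
qed

lemma f_abl_eq:
  fixes lam mu \<alpha> p q :: real
  assumes "2 < p" "q < p" "lam > 0" "mu > 0" "\<alpha> > 0"
  defines "t \<equiv> (lam / (\<alpha> * mu)) powr (1 / (p - q))"
  shows "f_abl a b lam mu q p \<Omega> G \<alpha> = (a + b * (t\<^sup>2 * dirichlet \<Omega> G)) * t / (mu * t powr (p - 1))"
proof -
  have "t > 0" using assms by (simp add: t_def)
  have "t powr (q - p) = (lam / (\<alpha> * mu)) powr (1 / (p - q) * (q - p))"
    by (simp add: t_def powr_powr)
  also have "1 / (p - q) * (q - p) = -1" using assms by (simp add: field_simps)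
  also have "(lam / (\<alpha> * mu)) powr -1 = \<alpha> * mu / lam" using assms by (simp add: powr_minus)
  finally have "t powr (q - p) = \<alpha> * mu / lam" .
  moreover have "mu powr ((q - p) / (p - 2)) * mu = mu powr ((q - 2) / (p - 2))"
  proof -
    have "(q - p) / (p - 2) + 1 = (q - 2) / (p - 2)" using assms by (simp add: field_simps)
    then have "mu powr ((q - 2) / (p - 2)) = mu powr ((q - p) / (p - 2)) * mu powr 1"
      unfolding powr_add[symmetric] by simp
    then show ?thesis using \<open>mu > 0\<close> by simp
  qed
  ultimately have "\<alpha> * mu powr ((q - 2) / (p - 2)) / lam = mu powr ((q - p) / (p - 2)) * t powr (q - p)"
    by (simp add: field_simps)
  then have base: "(\<alpha> * mu powr ((q - 2) / (p - 2)) / lam) powr e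
      = mu powr ((q - p) / (p - 2) * e) * t powr ((q - p) * e)" for e
    using \<open>t > 0\<close> assms by (simp add: powr_mult powr_powr)
  have ne: "p - 2 \<noteq> 0" "p - q \<noteq> 0" "2 - p \<noteq> 0" using assms by auto
  have e1: "(q - p) / (p - 2) * ((p - 2) / (p - q)) = -1"
    using ne by (simp add: divide_simps; simp add: algebra_simps)
  have e2: "(q - p) * ((p - 2) / (p - q)) = 2 - p"
    using ne by (simp add: divide_simps; simp add: algebra_simps)
  have e3: "(q - p) / (p - 2) * ((p - 4) / (p - q)) + 2 / (2 - p) = -1"
    using ne by (simp add: divide_simps; simp add: algebra_simps)
  have e4: "(q - p) * ((p - 4) / (p - q)) = 4 - p"
    using ne by (simp add: divide_simps; simp add: algebra_simps)
  let ?X = "\<alpha> * mu powr ((q - 2) / (p - 2)) / lam"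
  have X1: "?X powr ((p - 2) / (p - q)) = mu powr (-1) * t powr (2 - p)"
    unfolding base e1 e2 ..
  have "?X powr ((p - 4) / (p - q)) * mu powr (2 / (2 - p))
      = (mu powr ((q - p) / (p - 2) * ((p - 4) / (p - q))) * mu powr (2 / (2 - p))) * t powr (4 - p)"
    unfolding base e4 by (simp add: mult_ac)
  also have "\<dots> = mu powr (-1) * t powr (4 - p)"
    unfolding powr_add[symmetric] e3 ..
  finally have X2: "?X powr ((p - 4) / (p - q)) * mu powr (2 / (2 - p)) = mu powr (-1) * t powr (4 - p)" .
  have t1: "t powr (2 - p) = t / t powr (p - 1)"
    using powr_diff[of t 1 "p - 1"] \<open>t > 0\<close> by simp
  have t3: "t powr (4 - p) = t ^ 3 / t powr (p - 1)"
    using powr_diff[of t 3 "p - 1"] powr_realpow[OF \<open>t > 0\<close>, of 3] by simp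
  have "f_abl a b lam mu q p \<Omega> G \<alpha>
      = a * ?X powr ((p - 2) / (p - q)) + b * (?X powr ((p - 4) / (p - q)) * mu powr (2 / (2 - p))) * dirichlet \<Omega> G"
    by (simp add: f_abl_def mult_ac)
  also have "\<dots> = (a + b * (t\<^sup>2 * dirichlet \<Omega> G)) * t / (mu * t powr (p - 1))"
    unfolding X1 X2 t1 t3 using \<open>mu > 0\<close> by (simp add: powr_minus field_simps power2_eq_square power3_eq_cube add_divide_distrib)
  finally show ?thesis .
qed

theorem proposition1p1:
  fixes \<Omega> :: "(real^'n) set" and u :: "real^'n \<Rightarrow> real" and G :: "real^'n \<Rightarrow> real^'n"
    and q p a b lam \<mu> \<alpha> :: real
  assumes "CARD('n) \<ge> 3"
    and "smooth_bounded_domain \<Omega>"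
    and "2 \<le> q" and "q < p" and "p \<le> 2 * real CARD('n) / (real CARD('n) - 2)"
    and "a > 0" and "b > 0" and "lam > 0" and "\<mu> > 0" and "\<alpha> > 0"
    and "sol_P \<alpha> q p \<Omega> u G"
  shows "sol_Kirchhoff a b lam \<mu> q p \<Omega> (\<lambda>x. (lam / (\<alpha> * \<mu>)) powr (1 / (p - q)) * u x)
     \<longleftrightarrow> f_abl a b lam \<mu> q p \<Omega> G \<alpha> = 1"
proof -
  define t where "t = (lam / (\<alpha> * \<mu>)) powr (1 / (p - q))"
  have "open \<Omega>" "\<Omega> \<noteq> {}" using assms(2) unfolding smooth_bounded_domain_def by auto
  have "t > 0" using assms by (simp add: t_def)
  have "H01 \<Omega> u G" using assms(11) unfolding sol_P_def weak_sol_with_def by blast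
  then have "sol_Kirchhoff a b lam \<mu> q p \<Omega> (\<lambda>x. t * u x)
      \<longleftrightarrow> weak_sol_with (\<lambda>D. a + b * D) lam \<mu> q p \<Omega> (\<lambda>x. t * u x) (\<lambda>x. t *\<^sub>R G x)"
    by (intro sol_Kirchhoff_iff_weak_sol_with H01_scaleR \<open>open \<Omega>\<close>)
  also have "\<dots> \<longleftrightarrow> (a + b * (t\<^sup>2 * dirichlet \<Omega> G)) * t = \<mu> * t powr (p - 1)"
    using powr_balance[OF assms(4,8,9,10), folded t_def] assms(10)
    by (intro weak_sol_with_scaled_iff[OF \<open>open \<Omega>\<close> \<open>\<Omega> \<noteq> {}\<close> assms(11) _ \<open>t > 0\<close>]) auto
  also have "\<dots> \<longleftrightarrow> f_abl a b lam \<mu> q p \<Omega> G \<alpha> = 1"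
  proof -
    have "2 < p" using assms(3,4) by linarith
    moreover have "\<mu> * t powr (p - 1) > 0" using assms(9) \<open>t > 0\<close> by simp
    ultimately show ?thesis
      unfolding f_abl_eq[OF \<open>2 < p\<close> assms(4,8,9,10), folded t_def] by (auto simp: divide_eq_1_iff)
  qed
  finally show ?thesis unfolding t_def .
qed

end
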